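(* There exist resource selection games in which all resources have the same strictly increasing delay function (i.e., $d_r=d$ for all $r\in R$ with $d$ strictly increasing), together with a social network $G=(N,E)$ and a starting state, such that there is an infinite sequence of states $s^0,s^1,s^2,\dots$ where each $s^{t+1}$ is obtained from $s^t$ by a weak considerate improving move of some coalition $C_t$ that is a clique in $G$.
   Context: Resource selection game: a finite set $N$ of players and a finite set $R$ of resources; every player's strategy set is $R$, and for each $r\in R$ there is a non-negative delay function $d_r:\{1,\dots,|N|\}\to\mathbb{N}$. A state is $s=(s_i)_{i\in N}$ with $s_i\in R$; $\ell_r(s)$ is the number of players choosing $r$; player $i$'s cost is $c_i(s)=d_{s_i}(\ell_{s_i}(s))$ and utility $u_i(s)=-c_i(s)$. For $C\subseteq N$ write $s=(s_C,s_{-C})$. Given an undirected graph $G=(N,E)$, $\mathcal{N}(C)=\{j\in N:\exists i\in C,\ \{i,j\}\in E\}$. A weak considerate improving move of coalition $C$ from state $s$ is a choice $s'_C$ such that $u_i(s'_C,s_{-C})\ge u_i(s)$ for all $i\in C\cup\mathcal{N}(C)$ and $u_i(s'_C,s_{-C})>u_i(s)$ for at least one $i\in C$; the resulting state is $(s'_C,s_{-C})$. *)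

theory Defs
  imports Main
begin

text \<open>Resource selection game with player set N, resource set R and delay functions
  d r (only their values on 1..card N matter). A state is a function from players to
  resources; only its values on N matter.\<close>

definition load :: "'p set \<Rightarrow> ('p \<Rightarrow> 'r) \<Rightarrow> 'r \<Rightarrow> nat" where
  "load N s r = card {i \<in> N. s i = r}"

definition cost :: "'p set \<Rightarrow> ('r \<Rightarrow> nat \<Rightarrow> nat) \<Rightarrow> ('p \<Rightarrow> 'r) \<Rightarrow> 'p \<Rightarrow> nat" where
  "cost N d s i = d (s i) (load N s (s i))"

definition utility :: "'p set \<Rightarrow> ('r \<Rightarrow> nat \<Rightarrow> nat) \<Rightarrow> ('p \<Rightarrow> 'r) \<Rightarrow> 'p \<Rightarrow> int" where
  "utility N d s i = - int (cost N d s i)"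

definition is_state :: "'p set \<Rightarrow> 'r set \<Rightarrow> ('p \<Rightarrow> 'r) \<Rightarrow> bool" where
  "is_state N R s \<longleftrightarrow> (\<forall>i\<in>N. s i \<in> R)"

definition undirected_graph :: "'p set \<Rightarrow> ('p \<times> 'p) set \<Rightarrow> bool" where
  "undirected_graph N E \<longleftrightarrow> E \<subseteq> N \<times> N \<and> (\<forall>i j. (i, j) \<in> E \<longrightarrow> (j, i) \<in> E)
     \<and> (\<forall>i. (i, i) \<notin> E)"

definition neighbourhood :: "'p set \<Rightarrow> ('p \<times> 'p) set \<Rightarrow> 'p set \<Rightarrow> 'p set" where
  "neighbourhood N E C = {j \<in> N. \<exists>i\<in>C. (i, j) \<in> E}"

definition is_clique :: "'p set \<Rightarrow> ('p \<times> 'p) set \<Rightarrow> 'p set \<Rightarrow> bool" where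
  "is_clique N E C \<longleftrightarrow> C \<subseteq> N \<and> (\<forall>i\<in>C. \<forall>j\<in>C. i \<noteq> j \<longrightarrow> (i, j) \<in> E)"

definition weak_considerate_move ::
  "'p set \<Rightarrow> 'r set \<Rightarrow> ('r \<Rightarrow> nat \<Rightarrow> nat) \<Rightarrow> ('p \<times> 'p) set \<Rightarrow> 'p set
    \<Rightarrow> ('p \<Rightarrow> 'r) \<Rightarrow> ('p \<Rightarrow> 'r) \<Rightarrow> bool" where
  "weak_considerate_move N R d E C s s' \<longleftrightarrow>
     C \<subseteq> N \<and>
     (\<forall>i\<in>C. s' i \<in> R) \<and>
     (\<forall>i\<in>N - C. s' i = s i) \<and>
     (\<forall>i\<in>C \<union> neighbourhood N E C. utility N d s' i \<ge> utility N d s i) \<and>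
     (\<exists>i\<in>C. utility N d s' i > utility N d s i)"

end

theory Submission
  imports Defs
begin

text \<open>Eight players, three resources, every resource with delay d(x) = x. Four considerate
  clique moves lead from a state s to the state obtained from s by cyclically relabelling
  the resources. Since all resources have the same delay, relabelling resources by a
  permutation maps weak considerate moves to weak considerate moves, so the four moves
  can be repeated with relabelled states forever.\<close>

lemma load_comp_inj:
  assumes "inj \<pi>"
  shows "load N (\<pi> \<circ> s) (\<pi> r) = load N s r"
  using assms unfolding load_def by (simp add: inj_eq)

lemma utility_comp:
  assumes "inj \<pi>" and "\<And>r. d (\<pi> r) = d r"
  shows "utility N d (\<pi> \<circ> s) i = utility N d s i"
  using assms by (simp add: utility_def cost_def load_comp_inj[OF assms(1), of N s "s i", simplified])

lemma weak_considerate_move_comp: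
  assumes "inj \<pi>" and "\<pi> ` R \<subseteq> R" and "\<And>r. d (\<pi> r) = d r"
    and "weak_considerate_move N R d E C s s'"
  shows "weak_considerate_move N R d E C (\<pi> \<circ> s) (\<pi> \<circ> s')"
  using assms(2,4)
  unfolding weak_considerate_move_def
  by (auto simp: utility_comp[where \<pi> = \<pi> and d = d, OF assms(1,3)])

lemma load_lessThan: "load {..<n} s r = length (filter (\<lambda>i. s i = r) [0..<n])"
proof -
  have "{i \<in> {..<n}. s i = r} = set (filter (\<lambda>i. s i = r) [0..<n])" by auto
  then show ?thesis unfolding load_def by (metis distinct_card distinct_filter distinct_upt)
qed

lemma weak_considerate_move_iff_players:
  "weak_considerate_move N R d E C s s' \<longleftrightarrow>
     C \<subseteq> N \<and> (\<forall>i\<in>C. s' i \<in> R) \<and> (\<forall>i\<in>N. i \<notin> C \<longrightarrow> s' i = s i) \<and>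
     (\<forall>i\<in>N. (i \<in> C \<or> (\<exists>k\<in>C. (k, i) \<in> E)) \<longrightarrow> utility N d s i \<le> utility N d s' i) \<and>
     (\<exists>i\<in>C. utility N d s i < utility N d s' i)"
  unfolding weak_considerate_move_def neighbourhood_def by blast

lemma funpow_image_subset:
  assumes "f ` A \<subseteq> A"
  shows "(f ^^ n) ` A \<subseteq> A"
  using assms by (induction n) auto

lemma funpow_invariant:
  assumes "\<And>x. g (f x) = g x"
  shows "g ((f ^^ n) x) = g x"
  using assms by (induction n) auto

lemma weak_considerate_move_periodic:
  assumes "inj \<pi>" and "\<pi> ` R \<subseteq> R" and "\<And>r. d (\<pi> r) = d r" and "0 < p"
    and moves: "\<And>t. t < p \<Longrightarrow> weak_considerate_move N R d E (C t) (s t) (s (Suc t))"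
    and closes: "s p = \<pi> \<circ> s 0"
  shows "weak_considerate_move N R d E (C (t mod p))
           ((\<pi> ^^ (t div p)) \<circ> s (t mod p)) ((\<pi> ^^ (Suc t div p)) \<circ> s (Suc t mod p))"
proof -
  let ?k = "t div p" and ?j = "t mod p"
  have "weak_considerate_move N R d E (C ?j) (s ?j) (s (Suc ?j))"
    using moves \<open>0 < p\<close> by simp
  then have move: "weak_considerate_move N R d E (C ?j)
                     ((\<pi> ^^ ?k) \<circ> s ?j) ((\<pi> ^^ ?k) \<circ> s (Suc ?j))"
    by (rule weak_considerate_move_comp[where \<pi> = "\<pi> ^^ ?k" and d = d,
          OF inj_fn[OF \<open>inj \<pi>\<close>] funpow_image_subset[OF \<open>\<pi> ` R \<subseteq> R\<close>]
          funpow_invariant[where g = d, OF assms(3)]])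
  have "(\<pi> ^^ (Suc t div p)) \<circ> s (Suc t mod p) = (\<pi> ^^ ?k) \<circ> s (Suc ?j)"
  proof (cases "Suc ?j = p")
    case True
    then have "Suc t div p = Suc ?k" and "Suc t mod p = 0"
      by (simp_all add: div_Suc mod_Suc)
    then show ?thesis
      using True closes by (simp del: funpow.simps add: funpow_Suc_right comp_assoc)
  next
    case False
    then have "Suc t div p = ?k" and "Suc t mod p = Suc ?j"
      by (simp_all add: div_Suc mod_Suc)
    then show ?thesis by simp
  qed
  with move show ?thesis by simp
qed

definition example_edges :: "(nat \<times> nat) set" where
  "example_edges = (\<lambda>E. E \<union> E\<inverse>) {(0,1), (0,3), (0,4), (0,5), (1,3), (1,4), (1,5), (2,5), (2,6), (2,7),
     (3,4), (3,6), (3,7), (4,6), (4,7), (6,7)}"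

definition rotate_resources :: "nat \<Rightarrow> nat" where
  "rotate_resources r = (if r = 0 then 2 else if r = 1 then 0 else if r = 2 then 1 else r)"

text \<open>States are given on the players 0..7 only; the junk values of (!) beyond the list
  length are never inspected.\<close>
definition example_run :: "(nat \<Rightarrow> nat) list" where
  "example_run = [(!) [0,0,1,1,1,2,2,2], (!) [0,0,0,1,1,2,2,1], (!) [0,0,0,2,2,2,1,1],
     (!) [0,2,0,2,2,1,1,1], rotate_resources \<circ> (!) [0,0,1,1,1,2,2,2]]"

definition example_coalitions :: "nat set list" where
  "example_coalitions = [{2,6,7}, {3,4,6,7}, {0,1,5}, {0,1,3,4}]"

lemma lessThan_8: "{..<8::nat} = {0,1,2,3,4,5,6,7}" by auto

lemma example_run_moves:
  assumes "t < 4"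
  shows "weak_considerate_move {..<8} {0,1,2} (\<lambda>r x. x) example_edges
           (example_coalitions ! t) (example_run ! t) (example_run ! Suc t)"
proof -
  have "t = 0 \<or> t = 1 \<or> t = 2 \<or> t = 3" using assms by linarith
  then show ?thesis
    unfolding weak_considerate_move_iff_players utility_def cost_def load_lessThan
    unfolding lessThan_8
    by (elim disjE) (simp_all add: example_edges_def example_run_def example_coalitions_def
        upt_rec rotate_resources_def)
qed

lemma inj_rotate_resources: "inj rotate_resources"
  unfolding inj_def rotate_resources_def by auto

lemma rotate_resources_image: "rotate_resources ` {0, 1, 2} \<subseteq> {0, 1, 2}"
  unfolding rotate_resources_def by auto

lemma undirected_graph_example_edges: "undirected_graph {..<8} example_edges"
  unfolding undirected_graph_def example_edges_def by auto

lemma example_coalitions_cliques: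
  assumes "t < 4"
  shows "is_clique {..<8} example_edges (example_coalitions ! t)"
proof -
  have "t = 0 \<or> t = 1 \<or> t = 2 \<or> t = 3" using assms by linarith
  then show ?thesis
    unfolding is_clique_def
    by (elim disjE) (simp_all add: example_coalitions_def example_edges_def)
qed

theorem theorem2:
  shows "\<exists>(N :: nat set) (R :: nat set) (d :: nat \<Rightarrow> nat) (E :: (nat \<times> nat) set)
            (s :: nat \<Rightarrow> nat \<Rightarrow> nat) (C :: nat \<Rightarrow> nat set).
     finite N \<and> finite R \<and>
     strict_mono_on {1..card N} d \<and>
     undirected_graph N E \<and>
     is_state N R (s 0) \<and>
     (\<forall>t. is_clique N E (C t) \<and>
          weak_considerate_move N R (\<lambda>r. d) E (C t) (s t) (s (Suc t)))"
proof (intro exI conjI allI)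
  let ?s = "\<lambda>t. (rotate_resources ^^ (t div 4)) \<circ> example_run ! (t mod 4)"
  show "finite {..<8::nat}" and "finite {0, 1, 2::nat}" by simp_all
  show "strict_mono_on {1..card {..<8::nat}} (\<lambda>x::nat. x)"
    by (simp add: strict_mono_on_def)
  show "undirected_graph {..<8} example_edges"
    by (rule undirected_graph_example_edges)
  show "is_state {..<8} {0, 1, 2} (?s 0)"
    unfolding is_state_def lessThan_8 by (simp add: example_run_def)
  fix t
  show "is_clique {..<8} example_edges (example_coalitions ! (t mod 4))"
    by (simp add: example_coalitions_cliques)
  show "weak_considerate_move {..<8} {0, 1, 2} (\<lambda>r x. x) example_edges
          (example_coalitions ! (t mod 4)) (?s t) (?s (Suc t))"
    by (rule weak_considerate_move_periodic[where s = "(!) example_run"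
          and C = "(!) example_coalitions" and p = 4,
          OF inj_rotate_resources rotate_resources_image _ _ example_run_moves])
      (simp_all add: example_run_def)
qed

end
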